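(* Let $\mathcal{M}$ be a finite set of models, each model $\mathfrak{m}$ consisting of at most $Q$ features, with prior $p(\mathfrak{m})$ and marginal likelihood $p(\boldsymbol{y}\mid\mathfrak{m})>0$, and posterior $p(\mathfrak{m}\mid\boldsymbol{y}) = p(\mathfrak{m})p(\boldsymbol{y}\mid\mathfrak{m})/\sum_{\mathfrak{m}'\in\mathcal{M}}p(\mathfrak{m}')p(\boldsymbol{y}\mid\mathfrak{m}')$. Run the GMJMCMC algorithm for $T_{\max}$ population iterations, producing populations $\mathcal{S}_1,\dots,\mathcal{S}_{T_{\max}}$, each a set of $s$ features, and let $M_{\mathcal{S}_t}$ be the set of models visited at iteration $t$ within search space $\mathcal{S}_t$. Let $\mathcal{M}^*$ be the set of all models visited by the algorithm and define \[ \widehat{p}(\mathfrak{m}\mid\boldsymbol{y}) = \frac{p(\mathfrak{m})p(\boldsymbol{y}\mid\mathfrak{m})}{\sum_{\mathfrak{m}'\in\mathcal{M}^*}p(\mathfrak{m}')p(\boldsymbol{y}\mid\mathfrak{m}')}\,\mathrm{I}(\mathfrak{m}\in\mathcal{M}^* ). \] Assume $s\ge Q$ and that $\{(\mathcal{S}_t,M_{\mathcal{S}_t})\}_t$ forms an irreducible Markov chain over its (finite) set of possible states. Then $\widehat{p}(\mathfrak{m}\mid\boldsymbol{y})$ converges to $p(\mathfrak{m}\mid\boldsymbol{y})$ for every model $\mathfrak{m}$ as $T_{\max}\to\infty$.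
   Context: GMJMCMC (genetically modified mode jumping MCMC) is a model search algorithm: at each iteration $t$ it holds a population $\mathcal{S}_t$ of $s$ features (transformations of input covariates), runs an MCMC (mode-jumping MCMC) over the models whose features all belong to $\mathcal{S}_t$ (visiting the model set $M_{\mathcal{S}_t}$, including auxiliary models used to construct proposals), and then generates a new population $\mathcal{S}_{t+1}$ from $\mathcal{S}_t$ by random operators (filtration, mutation, modification, crossover, projection). The model space $\mathcal{M}$ consists of all subsets of at most $Q$ features from a finite feature space. A model is identified with the set of features it includes. *)

theory Defs
  imports "HOL-Probability.Probability"
begin

definition model_space :: "'f set \<Rightarrow> nat \<Rightarrow> 'f set set" where
  "model_space F Q = {m. m \<subseteq> F \<and> card m \<le> Q}"

text \<open>Renormalised posterior over a set of models Ms (zero outside Ms).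
  With Ms = the full model space this is p(m|y); with Ms = the visited
  models it is the estimator p-hat(m|y).\<close>
definition posterior ::
  "('f set \<Rightarrow> real) \<Rightarrow> ('f set \<Rightarrow> real) \<Rightarrow> 'f set set \<Rightarrow> 'f set \<Rightarrow> real" where
  "posterior prior lik Ms m =
     (if m \<in> Ms then prior m * lik m / (\<Sum>m'\<in>Ms. prior m' * lik m') else 0)"

definition visited :: "(nat \<Rightarrow> 'w \<Rightarrow> 'a \<times> 'b set) \<Rightarrow> nat \<Rightarrow> 'w \<Rightarrow> 'b set" where
  "visited X T \<omega> = (\<Union>t<T. snd (X t \<omega>))"

definition finite_markov_chain ::
  "'w measure \<Rightarrow> 's set \<Rightarrow> ('s \<Rightarrow> real) \<Rightarrow> ('s \<Rightarrow> 's \<Rightarrow> real) \<Rightarrow> (nat \<Rightarrow> 'w \<Rightarrow> 's) \<Rightarrow> bool" where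
  "finite_markov_chain \<Omega> St init K X \<longleftrightarrow>
     prob_space \<Omega> \<and> finite St \<and>
     (\<forall>t. X t \<in> measurable \<Omega> (count_space UNIV)) \<and>
     (\<forall>t. \<forall>\<omega>\<in>space \<Omega>. X t \<omega> \<in> St) \<and>
     (\<forall>x\<in>St. 0 \<le> init x) \<and> (\<Sum>x\<in>St. init x) = 1 \<and>
     (\<forall>x\<in>St. \<forall>y\<in>St. 0 \<le> K x y) \<and> (\<forall>x\<in>St. (\<Sum>y\<in>St. K x y) = 1) \<and>
     (\<forall>n xs. length xs = Suc n \<longrightarrow> set xs \<subseteq> St \<longrightarrow>
        measure \<Omega> {\<omega>\<in>space \<Omega>. \<forall>i\<le>n. X i \<omega> = xs ! i}
          = init (xs ! 0) * (\<Prod>i<n. K (xs ! i) (xs ! Suc i)))"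

definition irreducible :: "'s set \<Rightarrow> ('s \<Rightarrow> 's \<Rightarrow> real) \<Rightarrow> bool" where
  "irreducible St K \<longleftrightarrow>
     (\<forall>x\<in>St. \<forall>y\<in>St. (x, y) \<in> {(a, b). a \<in> St \<and> b \<in> St \<and> 0 < K a b}\<^sup>*)"

end

theory Submission
  imports Defs
begin

text \<open>
  Every model with at most \<open>Q \<le> s\<close> features can be padded to a population of \<open>s\<close> features,
  so by coverage it belongs to the model set of some state; conversely every state only
  contains models of the model space. It therefore suffices that almost surely every state
  of the chain is visited: from then on the visited models are the whole model space and the
  estimator coincides with the true posterior, whatever the prior and likelihood.

  An irreducible chain on a finite state space visits a fixed state \<open>y\<close> almost surely. From
  every \<open>x \<noteq> y\<close> the probability of avoiding \<open>y\<close> for some number of steps is below 1; taking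
  the longest of these finitely many horizons \<open>L\<close> gives a uniform bound \<open>c < 1\<close>, and the
  Markov property turns it into the bound \<open>c ^ j\<close> for avoiding \<open>y\<close> during \<open>j * L\<close> steps.
\<close>

text \<open>Probability that the chain with transition matrix \<open>K\<close>, started in \<open>x\<close>, avoids \<open>y\<close>
  during the next \<open>n\<close> steps.\<close>
fun avoid_prob :: "('s \<Rightarrow> 's \<Rightarrow> real) \<Rightarrow> 's set \<Rightarrow> 's \<Rightarrow> 's \<Rightarrow> nat \<Rightarrow> real" where
  "avoid_prob K St y x 0 = 1"
| "avoid_prob K St y x (Suc n) = (\<Sum>z\<in>St - {y}. K x z * avoid_prob K St y z n)"

locale stochastic_matrix =
  fixes St :: "'s set" and K :: "'s \<Rightarrow> 's \<Rightarrow> real"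
  assumes finite_St: "finite St"
    and K_nonneg: "x \<in> St \<Longrightarrow> z \<in> St \<Longrightarrow> 0 \<le> K x z"
    and K_row_sum: "x \<in> St \<Longrightarrow> (\<Sum>z\<in>St. K x z) = 1"
begin

lemma row_sum_Diff_le_1: "x \<in> St \<Longrightarrow> (\<Sum>z\<in>St - {y}. K x z) \<le> 1"
  using sum_mono2[of St "St - {y}" "K x"] finite_St K_nonneg K_row_sum by fastforce

lemma avoid_prob_le_1: "x \<in> St \<Longrightarrow> avoid_prob K St y x n \<le> 1"
proof (induction n arbitrary: x)
  case (Suc n)
  have "avoid_prob K St y x (Suc n) \<le> (\<Sum>z\<in>St - {y}. K x z)"
    unfolding avoid_prob.simps
    by (rule sum_mono) (use Suc K_nonneg in \<open>auto intro: mult_left_le\<close>)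
  then show ?case using row_sum_Diff_le_1[OF Suc.prems, of y] by linarith
qed simp

lemma avoid_prob_decseq: "x \<in> St \<Longrightarrow> decseq (avoid_prob K St y x)"
proof (rule decseq_SucI)
  show "avoid_prob K St y x (Suc n) \<le> avoid_prob K St y x n" if "x \<in> St" for x n
    using that
  proof (induction n arbitrary: x)
    case 0
    then show ?case using avoid_prob_le_1[of x y 1] by simp
  next
    case (Suc n)
    then show ?case
      unfolding avoid_prob.simps
      by (intro sum_mono) (auto intro: mult_left_mono K_nonneg)
  qed
qed

lemma avoid_prob_add_le:
  assumes "\<forall>z\<in>St - {y}. avoid_prob K St y z n \<le> c" "0 \<le> c" "x \<in> St - {y}"
  shows "avoid_prob K St y x (m + n) \<le> avoid_prob K St y x m * c"
  using assms(3)
proof (induction m arbitrary: x)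
  case (Suc m)
  have "avoid_prob K St y x (Suc m + n) = (\<Sum>z\<in>St - {y}. K x z * avoid_prob K St y z (m + n))"
    by simp
  also have "\<dots> \<le> (\<Sum>z\<in>St - {y}. K x z * (avoid_prob K St y z m * c))"
    by (rule sum_mono) (use Suc K_nonneg in \<open>auto intro: mult_left_mono\<close>)
  also have "\<dots> = avoid_prob K St y x (Suc m) * c"
    by (simp add: sum_distrib_right mult.assoc)
  finally show ?case .
qed (use assms in simp)

lemma avoid_prob_mult_le_power:
  assumes "\<forall>z\<in>St - {y}. avoid_prob K St y z L \<le> c" "0 \<le> c" "x \<in> St - {y}"
  shows "avoid_prob K St y x (j * L) \<le> c ^ j"
  using assms(3)
proof (induction j arbitrary: x)
  case (Suc j)
  have "avoid_prob K St y x (L + j * L) \<le> avoid_prob K St y x L * c ^ j"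
    by (rule avoid_prob_add_le) (use Suc assms in auto)
  also have "\<dots> \<le> c * c ^ j"
    by (rule mult_right_mono) (use Suc assms in auto)
  finally show ?case by (simp add: add.commute)
qed simp

lemma avoid_prob_less_1_if_reaches:
  assumes "(x, y) \<in> {(a, b). a \<in> St \<and> b \<in> St \<and> 0 < K a b}\<^sup>*" "x \<noteq> y"
  shows "\<exists>k. avoid_prob K St y x k < 1"
  using assms
proof (induction rule: converse_rtrancl_induct)
  case (step x z)
  then have x: "x \<in> St" and z: "z \<in> St" and K_pos: "0 < K x z" by auto
  show ?case
  proof (cases "z = y")
    case True
    have "avoid_prob K St y x 1 = 1 - K x y"
      using sum_diff1[of St "K x" y] finite_St K_row_sum x z True by simp
    then show ?thesis using K_pos True by (intro exI[of _ 1]) simp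
  next
    case False
    with step obtain k where k: "avoid_prob K St y z k < 1" by auto
    have "avoid_prob K St y x (Suc k) < (\<Sum>w\<in>St - {y}. K x w)"
      unfolding avoid_prob.simps
    proof (rule sum_strict_mono_ex1)
      show "finite (St - {y})" using finite_St by simp
      show "\<forall>w\<in>St - {y}. K x w * avoid_prob K St y w k \<le> K x w"
        using K_nonneg x avoid_prob_le_1 by (auto intro: mult_left_le)
      show "\<exists>w\<in>St - {y}. K x w * avoid_prob K St y w k < K x w"
        using z False K_pos k by (intro bexI[of _ z]) auto
    qed
    then show ?thesis using row_sum_Diff_le_1[OF x, of y] by (intro exI[of _ "Suc k"]) linarith
  qed
qed simp

lemma avoid_prob_uniform_bound:
  assumes "irreducible St K" "y \<in> St"
  obtains L c where "0 \<le> c" "c < 1" "\<forall>x\<in>St - {y}. avoid_prob K St y x L \<le> c"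
proof -
  have "\<forall>x\<in>St - {y}. \<exists>k. avoid_prob K St y x k < 1"
    using avoid_prob_less_1_if_reaches assms unfolding irreducible_def by blast
  then obtain k where k: "\<forall>x\<in>St - {y}. avoid_prob K St y x (k x) < 1" by metis
  define L where "L = Max (insert 0 (k ` (St - {y})))"
  define c where "c = Max (insert 0 ((\<lambda>x. avoid_prob K St y x L) ` (St - {y})))"
  have fin: "finite (St - {y})" using finite_St by simp
  have "avoid_prob K St y x L < 1" if x: "x \<in> St - {y}" for x
  proof -
    have "k x \<le> L" unfolding L_def using fin x by (auto intro: Max_ge)
    then show ?thesis using decseqD[OF avoid_prob_decseq] k x by (meson DiffD1 le_less_trans)
  qed
  then have "c < 1" unfolding c_def using fin by (subst Max_less_iff) auto
  moreover have "0 \<le> c" "\<forall>x\<in>St - {y}. avoid_prob K St y x L \<le> c"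
    unfolding c_def using fin by (auto intro: Max_ge)
  ultimately show thesis using that by blast
qed

end

definition path_weight :: "('s \<Rightarrow> 's \<Rightarrow> real) \<Rightarrow> 's list \<Rightarrow> real" where
  "path_weight K xs = (\<Prod>i<length xs - 1. K (xs ! i) (xs ! Suc i))"

lemma path_weight_snoc:
  assumes "xs \<noteq> []"
  shows "path_weight K (xs @ [z]) = path_weight K xs * K (last xs) z"
proof -
  obtain n where n: "length xs = Suc n" using assms by (cases xs) auto
  have "path_weight K (xs @ [z]) = (\<Prod>i<Suc n. K ((xs @ [z]) ! i) ((xs @ [z]) ! Suc i))"
    unfolding path_weight_def using n by simp
  also have "\<dots> = (\<Prod>i<n. K ((xs @ [z]) ! i) ((xs @ [z]) ! Suc i)) * K (last xs) z"
    using n assms by (simp add: nth_append last_conv_nth)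
  also have "(\<Prod>i<n. K ((xs @ [z]) ! i) ((xs @ [z]) ! Suc i)) = path_weight K xs"
    unfolding path_weight_def using n by (auto intro!: prod.cong simp: nth_append)
  finally show ?thesis .
qed

locale markov_chain =
  fixes \<Omega> :: "'w measure" and St :: "'s set" and init :: "'s \<Rightarrow> real"
    and K :: "'s \<Rightarrow> 's \<Rightarrow> real" and X :: "nat \<Rightarrow> 'w \<Rightarrow> 's"
  assumes markov: "finite_markov_chain \<Omega> St init K X"

sublocale markov_chain \<subseteq> stochastic_matrix St K
  using markov unfolding finite_markov_chain_def by unfold_locales blast+

context markov_chain
begin

interpretation prob_space \<Omega>
  using markov unfolding finite_markov_chain_def by blast

lemma X_measurable[measurable]: "X t \<in> measurable \<Omega> (count_space UNIV)"
  using markov unfolding finite_markov_chain_def by blast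

lemma X_in_St: "\<omega> \<in> space \<Omega> \<Longrightarrow> X t \<omega> \<in> St"
  using markov unfolding finite_markov_chain_def by blast

lemma init_nonneg: "x \<in> St \<Longrightarrow> 0 \<le> init x"
  using markov unfolding finite_markov_chain_def by blast

lemma init_sum: "(\<Sum>x\<in>St. init x) = 1"
  using markov unfolding finite_markov_chain_def by blast

lemma measure_cylinder:
  "length xs = Suc n \<Longrightarrow> set xs \<subseteq> St \<Longrightarrow>
    measure \<Omega> {\<omega>\<in>space \<Omega>. \<forall>i\<le>n. X i \<omega> = xs ! i} = init (xs ! 0) * path_weight K xs"
  using markov unfolding finite_markov_chain_def path_weight_def by simp

definition avoiding_cylinder :: "'s list \<Rightarrow> 's \<Rightarrow> nat \<Rightarrow> 'w set" where
  "avoiding_cylinder xs y n = {\<omega>\<in>space \<Omega>. (\<forall>i<length xs. X i \<omega> = xs ! i) \<and>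
      (\<forall>i. length xs \<le> i \<and> i < length xs + n \<longrightarrow> X i \<omega> \<noteq> y)}"

lemma avoiding_cylinder_sets[measurable]: "avoiding_cylinder xs y n \<in> sets \<Omega>"
  unfolding avoiding_cylinder_def by measurable

lemma avoiding_cylinder_Suc:
  "avoiding_cylinder xs y (Suc n) = (\<Union>z\<in>St - {y}. avoiding_cylinder (xs @ [z]) y n)"
proof (intro set_eqI iffI)
  fix \<omega> assume "\<omega> \<in> avoiding_cylinder xs y (Suc n)"
  then have "X (length xs) \<omega> \<in> St - {y}"
    and "\<omega> \<in> avoiding_cylinder (xs @ [X (length xs) \<omega>]) y n"
    unfolding avoiding_cylinder_def using X_in_St by (auto simp: nth_append less_Suc_eq)
  then show "\<omega> \<in> (\<Union>z\<in>St - {y}. avoiding_cylinder (xs @ [z]) y n)" by blast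
next
  fix \<omega> assume "\<omega> \<in> (\<Union>z\<in>St - {y}. avoiding_cylinder (xs @ [z]) y n)"
  then obtain z where z: "z \<in> St - {y}" and "\<omega> \<in> avoiding_cylinder (xs @ [z]) y n" by blast
  then have "\<omega> \<in> space \<Omega>" "\<forall>i<length xs. X i \<omega> = xs ! i" "X (length xs) \<omega> = z"
    and later: "\<forall>i. Suc (length xs) \<le> i \<and> i < Suc (length xs) + n \<longrightarrow> X i \<omega> \<noteq> y"
    unfolding avoiding_cylinder_def by (auto simp: nth_append)
  moreover have "X i \<omega> \<noteq> y" if "length xs \<le> i" "i < length xs + Suc n" for i
    using that later \<open>X (length xs) \<omega> = z\<close> z by (cases "i = length xs") auto
  ultimately show "\<omega> \<in> avoiding_cylinder xs y (Suc n)"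
    unfolding avoiding_cylinder_def by blast
qed

lemma measure_avoiding_cylinder:
  "xs \<noteq> [] \<Longrightarrow> set xs \<subseteq> St \<Longrightarrow>
    measure \<Omega> (avoiding_cylinder xs y n)
      = init (hd xs) * path_weight K xs * avoid_prob K St y (last xs) n"
proof (induction n arbitrary: xs)
  case 0
  then obtain m where m: "length xs = Suc m" by (cases xs) auto
  have "avoiding_cylinder xs y 0 = {\<omega>\<in>space \<Omega>. \<forall>i\<le>m. X i \<omega> = xs ! i}"
    unfolding avoiding_cylinder_def using m by (auto simp: less_Suc_eq_le)
  then show ?case using measure_cylinder[OF m 0(2)] 0(1) by (simp add: hd_conv_nth)
next
  case (Suc n)
  have "measure \<Omega> (avoiding_cylinder xs y (Suc n))
      = (\<Sum>z\<in>St - {y}. measure \<Omega> (avoiding_cylinder (xs @ [z]) y n))"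
    unfolding avoiding_cylinder_Suc
  proof (rule finite_measure_finite_Union)
    show "disjoint_family_on (\<lambda>z. avoiding_cylinder (xs @ [z]) y n) (St - {y})"
      unfolding disjoint_family_on_def avoiding_cylinder_def by (auto simp: nth_append)
  qed (use finite_St in auto)
  also have "\<dots> = (\<Sum>z\<in>St - {y}.
      init (hd xs) * path_weight K xs * (K (last xs) z * avoid_prob K St y z n))"
    using Suc by (intro sum.cong) (auto simp: path_weight_snoc)
  also have "\<dots> = init (hd xs) * path_weight K xs * avoid_prob K St y (last xs) (Suc n)"
    by (simp add: sum_distrib_left)
  finally show ?case .
qed

lemma measure_never_visits_le:
  assumes "\<forall>x\<in>St - {y}. avoid_prob K St y x L \<le> c" "0 \<le> c" "y \<in> St"
  shows "measure \<Omega> {\<omega>\<in>space \<Omega>. \<forall>t. X t \<omega> \<noteq> y} \<le> c ^ j"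
proof -
  have "{\<omega>\<in>space \<Omega>. \<forall>t. X t \<omega> \<noteq> y} \<subseteq> (\<Union>x\<in>St - {y}. avoiding_cylinder [x] y (j * L))"
    unfolding avoiding_cylinder_def using X_in_St by fastforce
  then have "measure \<Omega> {\<omega>\<in>space \<Omega>. \<forall>t. X t \<omega> \<noteq> y}
      \<le> measure \<Omega> (\<Union>x\<in>St - {y}. avoiding_cylinder [x] y (j * L))"
    using finite_St by (intro finite_measure_mono) auto
  also have "\<dots> \<le> (\<Sum>x\<in>St - {y}. measure \<Omega> (avoiding_cylinder [x] y (j * L)))"
    by (rule finite_measure_subadditive_finite) (use finite_St in auto)
  also have "\<dots> = (\<Sum>x\<in>St - {y}. init x * avoid_prob K St y x (j * L))"
    using assms by (intro sum.cong) (auto simp: measure_avoiding_cylinder path_weight_def)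
  also have "\<dots> \<le> (\<Sum>x\<in>St - {y}. init x * c ^ j)"
    using avoid_prob_mult_le_power[OF assms(1,2)] init_nonneg
    by (intro sum_mono) (auto intro: mult_left_mono)
  also have "\<dots> \<le> (\<Sum>x\<in>St. init x * c ^ j)"
    by (rule sum_mono2) (use finite_St init_nonneg assms(2) in auto)
  also have "\<dots> = c ^ j"
    using init_sum by (simp add: sum_distrib_right[symmetric])
  finally show ?thesis .
qed

lemma AE_visits:
  assumes "irreducible St K" "y \<in> St"
  shows "AE \<omega> in \<Omega>. \<exists>t. X t \<omega> = y"
proof -
  obtain L c where c: "0 \<le> c" "c < 1" "\<forall>x\<in>St - {y}. avoid_prob K St y x L \<le> c"
    using avoid_prob_uniform_bound[OF assms] .
  let ?N = "{\<omega>\<in>space \<Omega>. \<forall>t. X t \<omega> \<noteq> y}"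
  have "(\<lambda>j. c ^ j) \<longlonglongrightarrow> 0"
    using c by (intro LIMSEQ_power_zero) simp
  then have "measure \<Omega> ?N \<le> 0"
    using measure_never_visits_le[OF c(3,1) assms(2)] by (intro LIMSEQ_le_const) auto
  then have "?N \<in> null_sets \<Omega>"
    by (simp add: emeasure_eq_measure null_sets_def measure_nonneg antisym)
  then show ?thesis by (rule AE_I') auto
qed

lemma AE_visits_all:
  assumes "irreducible St K"
  shows "AE \<omega> in \<Omega>. \<forall>y\<in>St. \<exists>t. X t \<omega> = y"
  using AE_visits[OF assms] finite_St by (intro AE_finite_allI)

end

lemma visited_eventually_eq:
  assumes "finite St" "\<And>t. X t \<omega> \<in> St" "\<forall>x\<in>St. \<exists>t. X t \<omega> = x"
  shows "eventually (\<lambda>T. visited X T \<omega> = (\<Union>x\<in>St. snd x)) sequentially"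
proof -
  obtain t where t: "\<forall>x\<in>St. X (t x) \<omega> = x" using assms(3) by metis
  have "visited X T \<omega> = (\<Union>x\<in>St. snd x)" if T: "Suc (Max (t ` St)) \<le> T" for T
  proof
    show "visited X T \<omega> \<subseteq> (\<Union>x\<in>St. snd x)"
      unfolding visited_def using assms(2) by blast
    show "(\<Union>x\<in>St. snd x) \<subseteq> visited X T \<omega>"
    proof
      fix m assume "m \<in> (\<Union>x\<in>St. snd x)"
      then obtain x where x: "x \<in> St" "m \<in> snd x" by blast
      have "t x \<le> Max (t ` St)" using assms(1) x by simp
      then have "t x < T" using T by simp
      then show "m \<in> visited X T \<omega>" unfolding visited_def using t x by force
    qed
  qed
  then show ?thesis unfolding eventually_sequentially by blast
qed

lemma models_of_states_eq_model_space:
  assumes "finite F" "s \<ge> Q" "St \<noteq> {}"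
    and states: "\<forall>(S, M)\<in>St. S \<subseteq> F \<and> card S = s \<and> M \<subseteq> {m\<in>model_space F Q. m \<subseteq> S}"
    and coverage: "\<forall>S. S \<subseteq> F \<and> card S = s \<longrightarrow>
                     (\<forall>m. m \<subseteq> S \<and> card m \<le> Q \<longrightarrow> (\<exists>M. (S, M) \<in> St \<and> m \<in> M))"
  shows "(\<Union>x\<in>St. snd x) = model_space F Q"
proof
  show "(\<Union>x\<in>St. snd x) \<subseteq> model_space F Q"
  proof
    fix m assume "m \<in> (\<Union>x\<in>St. snd x)"
    then obtain S M where "(S, M) \<in> St" "m \<in> M" by auto
    then show "m \<in> model_space F Q" using states by blast
  qed
  obtain S0 M0 where "(S0, M0) \<in> St" using assms(3) by auto
  then have "S0 \<subseteq> F" "card S0 = s" using states by auto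
  then have "s \<le> card F" using card_mono[OF assms(1)] by blast
  show "model_space F Q \<subseteq> (\<Union>x\<in>St. snd x)"
  proof
    fix m assume "m \<in> model_space F Q"
    then have "m \<subseteq> F" "card m \<le> Q" unfolding model_space_def by auto
    then obtain S where "m \<subseteq> S" "S \<subseteq> F" "card S = s"
      using exists_subset_between[of m s F] \<open>s \<le> card F\<close> assms(1,2) by auto
    then obtain M where "(S, M) \<in> St" "m \<in> M"
      using coverage \<open>card m \<le> Q\<close> by blast
    then show "m \<in> (\<Union>x\<in>St. snd x)" by force
  qed
qed

theorem theorem1:
  fixes F :: "'f set" and Q s :: nat
    and prior lik :: "'f set \<Rightarrow> real"
    and \<Omega> :: "'w measure"
    and St :: "('f set \<times> 'f set set) set"
    and init :: "'f set \<times> 'f set set \<Rightarrow> real"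
    and K :: "'f set \<times> 'f set set \<Rightarrow> 'f set \<times> 'f set set \<Rightarrow> real"
    and X :: "nat \<Rightarrow> 'w \<Rightarrow> 'f set \<times> 'f set set"
  assumes finF: "finite F"
    and prior_nonneg: "\<forall>m\<in>model_space F Q. 0 \<le> prior m"
    and prior_sum: "(\<Sum>m\<in>model_space F Q. prior m) = 1"
    and lik_pos: "\<forall>m\<in>model_space F Q. 0 < lik m"
    and sQ: "s \<ge> Q"
    and states: "\<forall>(S, M)\<in>St. S \<subseteq> F \<and> card S = s \<and> M \<subseteq> {m\<in>model_space F Q. m \<subseteq> S}"
    and coverage: "\<forall>S. S \<subseteq> F \<and> card S = s \<longrightarrow>
                     (\<forall>m. m \<subseteq> S \<and> card m \<le> Q \<longrightarrow> (\<exists>M. (S, M) \<in> St \<and> m \<in> M))"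
    and chain: "finite_markov_chain \<Omega> St init K X"
    and irred: "irreducible St K"
  shows "AE \<omega> in \<Omega>. \<forall>m\<in>model_space F Q.
           (\<lambda>T. posterior prior lik (visited X T \<omega>) m)
             \<longlonglongrightarrow> posterior prior lik (model_space F Q) m"
proof -
  interpret markov_chain \<Omega> St init K X by (rule markov_chain.intro[OF chain])
  have "St \<noteq> {}" using init_sum by auto
  then have models: "(\<Union>x\<in>St. snd x) = model_space F Q"
    using models_of_states_eq_model_space[OF finF sQ _ states coverage] by blast
  show ?thesis
    using AE_space AE_visits_all[OF irred]
  proof eventually_elim
    case (elim \<omega>)
    then have "eventually (\<lambda>T. visited X T \<omega> = model_space F Q) sequentially"
      using visited_eventually_eq[OF finite_St, of X \<omega>] X_in_St models by simp
    then show ?case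
      by (auto intro!: tendsto_eventually elim!: eventually_mono)
  qed
qed

end
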